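(* Let $r,s,n$ be positive integers with $s\mid r$, let $\omega\in G(r,s,n)$, and let $m_1,m_2\ge 0$ be integers. Then \[ \widetilde f_{m_1,m_2}^{\omega}=\left(r^{m_1-n+1}\,n^{m_2}\binom{m_1+m_2}{m_1} f_{m_2}^{\phi(\omega)}\right)\widetilde f_{m_1}^{\pi(\omega)}, \] where $\widetilde f_{m_1}^{\pi(\omega)}$ is the connected factorization number of $\pi(\omega)$ in $S_n=G(1,1,n)$, and \[ f_{m_2}^{\phi(\omega)}=\frac{1}{r/s}\Big((r/s-1)^{m_2}-(-1)^{m_2}\Big)+\delta(\omega)(-1)^{m_2}. \]
   Context: Let $r,s,n$ be positive integers with $s\mid r$ and $\zeta_r=e^{2\pi i/r}$. For $1\le i<j\le n$ and $0\le k<r$, let $\sigma_{ij}^{k/r}\in GL(\mathbb{C}^n)$ send $(a_1,\dots,a_n)$ to the vector whose $i$-th coordinate is $\zeta_r^{-k}a_j$, whose $j$-th coordinate is $\zeta_r^{k}a_i$, and whose other coordinates are unchanged. For $1\le i\le n$ and $0<k<r/s$, let $\tau_i^{sk/r}$ multiply the $i$-th coordinate by $\zeta_r^{sk}$ and fix the others. Let $R_1$ be the set of all $\sigma_{ij}^{k/r}$, $R_2$ the set of all $\tau_i^{sk/r}$ (empty if $r=s$), and $R=R_1\sqcup R_2$. The group $G(r,s,n)$ is the group generated by $R$; equivalently, it is the group of $n\times n$ complex matrices with exactly one nonzero entry in each row and column, each nonzero entry an $r$-th root of unity, and the product of the nonzero entries an $(r/s)$-th root of unity. In particular $G(1,1,n)=S_n$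 (permutation matrices), whose set $R$ is the set of transpositions, and $G(r,s,1)=\mu_{r/s}$ (the $(r/s)$-th roots of unity), whose set $R$ is the set of non-identity elements. Let $\pi:G(r,s,n)\to S_n$ replace each nonzero entry by $1$, $\phi:G(r,s,n)\to\mu_{r/s}$ be the product of the nonzero entries, and $\delta(\omega)=1$ if $\phi(\omega)=1$ and $\delta(\omega)=0$ otherwise. For $\omega\in G(r,s,n)$ and $m\ge0$, a factorization of $\omega$ of length $m$ is a tuple $(\rho_1,\dots,\rho_m)\in R^m$ with $\rho_m\cdots\rho_1=\omega$; $f_m^\omega$ is the number of them. Its associated graph has vertex set $\{1,\dots,n\}$ and, for each $t$, an edge $\{i,j\}$ if $\rho_t=\sigma_{ij}^{k/r}$ and a self-loop at $i$ if $\rho_t=\tau_i^{sk/r}$. A factorization is connected if this graph is connected. $\widetilde f_m^\omega$ is the number of connected factorizations of length $m$, and $\widetilde f_{m_1,m_2}^\omega$ is the number of connected factorizations of length $m_1+m_2$ in which exactly $m_1$ factors lie in $R_1$ and $m_2$ lie in $R_2$. For $\kappa\in\mu_{r/s}$, $f_{m}^{\kappa}$ is the number of $m$-tuples of non-identity elements of $\mu_{r/s}$ whose product is $\kappa$. *)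

theory Defs
  imports Complex_Main
begin

text \<open>Matrices over the complex numbers, indexed by 0..<n (coordinates 1..n of the
paper are shifted to 0..n-1); entries outside the index range are 0.\<close>

type_synonym cmat = "nat \<Rightarrow> nat \<Rightarrow> complex"

definition mat_mult :: "nat \<Rightarrow> cmat \<Rightarrow> cmat \<Rightarrow> cmat" where
  "mat_mult n A B = (\<lambda>i j. if i < n \<and> j < n then (\<Sum>k<n. A i k * B k j) else 0)"

definition mat_one :: "nat \<Rightarrow> cmat" where
  "mat_one n = (\<lambda>i j. if i < n \<and> j < n \<and> i = j then 1 else 0)"

definition zeta :: "nat \<Rightarrow> complex" where
  "zeta r = cis (2 * pi / real r)"

definition mu :: "nat \<Rightarrow> complex set" where
  "mu k = {z. z ^ k = 1}"

definition phi :: "nat \<Rightarrow> cmat \<Rightarrow> complex" where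
  "phi n A = (\<Prod>i<n. \<Prod>j<n. (if A i j = 0 then 1 else A i j))"

definition Grp :: "nat \<Rightarrow> nat \<Rightarrow> nat \<Rightarrow> cmat set" where
  "Grp r s n = {A. (\<forall>i j. (n \<le> i \<or> n \<le> j) \<longrightarrow> A i j = 0)
      \<and> (\<forall>i<n. \<exists>!j. j < n \<and> A i j \<noteq> 0)
      \<and> (\<forall>j<n. \<exists>!i. i < n \<and> A i j \<noteq> 0)
      \<and> (\<forall>i<n. \<forall>j<n. A i j \<noteq> 0 \<longrightarrow> A i j ^ r = 1)
      \<and> phi n A \<in> mu (r div s)}"

definition piS :: "cmat \<Rightarrow> cmat" where
  "piS A = (\<lambda>i j. if A i j \<noteq> 0 then 1 else 0)"

definition delta :: "nat \<Rightarrow> cmat \<Rightarrow> nat" where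
  "delta n A = (if phi n A = 1 then 1 else 0)"

text \<open>Labels of reflections: Sig i j k stands for sigma_{ij}^{k/r} and Tau i k for
tau_i^{sk/r}.  Distinct valid labels give distinct matrices, so tuples of labels
correspond bijectively to tuples of elements of R.\<close>
datatype refl = Sig nat nat nat | Tau nat nat

fun valid_refl :: "nat \<Rightarrow> nat \<Rightarrow> nat \<Rightarrow> refl \<Rightarrow> bool" where
  "valid_refl r s n (Sig i j k) = (i < j \<and> j < n \<and> k < r)"
| "valid_refl r s n (Tau i k) = (i < n \<and> 0 < k \<and> k < r div s)"

fun is_Sig :: "refl \<Rightarrow> bool" where
  "is_Sig (Sig i j k) = True"
| "is_Sig (Tau i k) = False"

fun refl_mat :: "nat \<Rightarrow> nat \<Rightarrow> nat \<Rightarrow> refl \<Rightarrow> cmat" where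
  "refl_mat r s n (Sig i j k) = (\<lambda>a b. if a < n \<and> b < n then
       (if a = i \<and> b = j then inverse (zeta r ^ k)
        else if a = j \<and> b = i then zeta r ^ k
        else if a = b \<and> a \<noteq> i \<and> a \<noteq> j then 1 else 0) else 0)"
| "refl_mat r s n (Tau i k) = (\<lambda>a b. if a < n \<and> b < n \<and> a = b then
       (if a = i then zeta r ^ (s * k) else 1) else 0)"

definition Refl :: "nat \<Rightarrow> nat \<Rightarrow> nat \<Rightarrow> refl set" where
  "Refl r s n = {x. valid_refl r s n x}"

text \<open>For the list [rho_1,...,rho_m], the product rho_m \<cdots> rho_1.\<close>
definition fact_prod :: "nat \<Rightarrow> nat \<Rightarrow> nat \<Rightarrow> refl list \<Rightarrow> cmat" where
  "fact_prod r s n xs = foldr (\<lambda>x acc. mat_mult n acc (refl_mat r s n x)) xs (mat_one n)"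

definition factorizations :: "nat \<Rightarrow> nat \<Rightarrow> nat \<Rightarrow> nat \<Rightarrow> cmat \<Rightarrow> refl list set" where
  "factorizations r s n m w = {xs. length xs = m \<and> set xs \<subseteq> Refl r s n \<and> fact_prod r s n xs = w}"

text \<open>Edges of the associated graph (self-loops are irrelevant for connectivity).\<close>
definition fact_edges :: "refl list \<Rightarrow> (nat \<times> nat) set" where
  "fact_edges xs = {(i, j) | i j k. Sig i j k \<in> set xs}"

definition connected_fact :: "nat \<Rightarrow> refl list \<Rightarrow> bool" where
  "connected_fact n xs = (\<forall>a<n. \<forall>b<n. (a, b) \<in> (fact_edges xs \<union> (fact_edges xs)\<inverse>)\<^sup>*)"

definition conn_num :: "nat \<Rightarrow> nat \<Rightarrow> nat \<Rightarrow> nat \<Rightarrow> cmat \<Rightarrow> nat" where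
  "conn_num r s n m w = card {xs \<in> factorizations r s n m w. connected_fact n xs}"

definition conn_num2 :: "nat \<Rightarrow> nat \<Rightarrow> nat \<Rightarrow> nat \<Rightarrow> nat \<Rightarrow> cmat \<Rightarrow> nat" where
  "conn_num2 r s n m1 m2 w = card {xs \<in> factorizations r s n (m1 + m2) w. connected_fact n xs
      \<and> length (filter is_Sig xs) = m1 \<and> length (filter (\<lambda>x. \<not> is_Sig x) xs) = m2}"

definition cyc_num :: "nat \<Rightarrow> nat \<Rightarrow> complex \<Rightarrow> nat" where
  "cyc_num q m \<kappa> = card {zs. length zs = m \<and> set zs \<subseteq> mu q - {1} \<and> prod_list zs = \<kappa>}"

end

theory Submission
  imports Defs
begin

text \<open>
  Elements of G(r,s,n) are monomial matrices, and a product of reflections is computed by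
  composing the underlying permutations and multiplying the twisted diagonals.  Forgetting the
  labels k of the transpositions sigma_ij^(k/r) turns a factorization into a shape: a word in
  plain transpositions and diagonal reflections tau_i^(sk/r).  Reading a shape one factor at a
  time, a transposition joining two components of the graph built so far determines its label
  uniquely, while any other transposition leaves its label free; a diagonal is reached exactly
  when on every component its product equals the product of the diagonal reflections acting
  there.  Hence a connected shape whose permutation is pi(omega) and whose diagonal reflections
  multiply to phi(omega) carries r^(m1 + 1 - n) labelings with product omega, and other shapes
  carry none.  These shapes are exactly the shuffles of a connected factorization of pi(omega)
  in S_n with a word of m2 diagonal reflections of product phi(omega): each pair has
  (m1 + m2 choose m1) shuffles, and there are n^m2 f_m2^phi(omega) such words because every
  nontrivial (r/s)-th root of unity is the value of exactly n diagonal reflections.  The closed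
  form of f_m^kappa solves the recursion f_(m+1)^kappa + f_m^kappa = (r/s - 1)^m.
\<close>

section \<open>Roots of unity\<close>

lemma zeta_power: "0 < r \<Longrightarrow> zeta r ^ k = cis (2 * pi * real k / real r)"
  unfolding zeta_def by (simp add: DeMoivre mult_ac)

lemma bij_betw_zeta_power: "0 < r \<Longrightarrow> bij_betw (\<lambda>k. zeta r ^ k) {..<r} (mu r)"
  using bij_betw_roots_unity[of r] by (simp add: zeta_power mu_def)

lemma zeta_nonzero [simp]: "zeta r \<noteq> 0"
  by (simp add: zeta_def)

lemma zeta_power_root: "0 < r \<Longrightarrow> (zeta r ^ k) ^ r = 1"
proof -
  assume "0 < r"
  then have "zeta r ^ r = 1" by (simp add: zeta_power complex_eq_iff)
  then show ?thesis by (metis power_mult mult.commute power_one)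
qed

lemma ex1_zeta_power:
  assumes "0 < r" "u ^ r = 1"
  shows "\<exists>!k. k < r \<and> zeta r ^ k = u"
proof -
  have bij: "bij_betw (\<lambda>k. zeta r ^ k) {..<r} (mu r)" using bij_betw_zeta_power[OF assms(1)] .
  moreover have "u \<in> mu r" using assms by (simp add: mu_def)
  ultimately obtain k where "k < r" "zeta r ^ k = u" unfolding bij_betw_def by (metis imageE lessThan_iff)
  with bij show ?thesis unfolding bij_betw_def inj_on_def by auto
qed

lemma zeta_power_mult:
  assumes "s dvd r" "0 < r"
  shows "zeta r ^ (s * k) = zeta (r div s) ^ k"
proof -
  obtain q where "r = s * q" using assms(1) ..
  with assms show ?thesis by (simp add: zeta_power field_simps)
qed

lemma finite_mu: "0 < q \<Longrightarrow> finite (mu q)"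
  unfolding mu_def by (rule finite_roots_unity) simp

lemma card_mu: "0 < q \<Longrightarrow> card (mu q) = q"
  by (simp add: mu_def card_roots_unity_eq)

lemma bij_betw_zeta_power_nontrivial:
  "0 < q \<Longrightarrow> bij_betw (\<lambda>k. zeta q ^ k) ({..<q} - {0}) (mu q - {1})"
  by (rule bij_betw_DiffI[OF bij_betw_zeta_power]) (auto simp: mu_def bij_betw_def)

lemma prod_root_unity:
  "(\<And>c. c \<in> C \<Longrightarrow> (D c :: 'a :: comm_semiring_1) ^ r = 1) \<Longrightarrow> (\<Prod>c\<in>C. D c) ^ r = 1"
  by (simp add: prod_power_distrib)

lemma root_unity_nonzero: "0 < r \<Longrightarrow> (z :: 'a :: semiring_1) ^ r = 1 \<Longrightarrow> z \<noteq> 0"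
  by (metis power_0_left less_not_refl2 zero_neq_one)

section \<open>Monomial matrices\<close>

definition monomial :: "nat \<Rightarrow> (nat \<Rightarrow> nat) \<Rightarrow> (nat \<Rightarrow> complex) \<Rightarrow> cmat" where
  "monomial n p d = (\<lambda>a b. if a < n \<and> b < n \<and> b = p a then d a else 0)"

lemma mat_mult_monomial:
  assumes "\<forall>a<n. p a < n"
  shows "mat_mult n (monomial n p d) (monomial n q e) = monomial n (q \<circ> p) (\<lambda>a. d a * e (p a))"
proof (intro ext)
  fix a b
  show "mat_mult n (monomial n p d) (monomial n q e) a b = monomial n (q \<circ> p) (\<lambda>a. d a * e (p a)) a b"
  proof (cases "a < n \<and> b < n")
    case True
    then have "(\<Sum>k<n. monomial n p d a k * monomial n q e k b)
        = (\<Sum>k<n. if k = p a then d a * monomial n q e k b else 0)"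
      by (intro sum.cong) (auto simp: monomial_def)
    also have "\<dots> = d a * monomial n q e (p a) b"
      using assms True by (subst sum.delta) auto
    finally show ?thesis
      using assms True by (auto simp: mat_mult_def monomial_def)
  qed (auto simp: mat_mult_def monomial_def)
qed

lemma mat_one_monomial: "mat_one n = monomial n id (\<lambda>_. 1)"
  by (auto simp: mat_one_def monomial_def fun_eq_iff)

lemma monomial_eq_iff:
  assumes "\<forall>a<n. p a < n" "\<forall>a<n. p' a < n" "\<forall>a<n. d a \<noteq> 0" "\<forall>a<n. d' a \<noteq> 0"
  shows "monomial n p d = monomial n p' d' \<longleftrightarrow> (\<forall>a<n. p a = p' a \<and> d a = d' a)"
proof
  assume eq: "monomial n p d = monomial n p' d'"
  show "\<forall>a<n. p a = p' a \<and> d a = d' a"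
  proof (intro allI impI)
    fix a assume "a < n"
    moreover from eq have "monomial n p d a (p a) = monomial n p' d' a (p a)" by simp
    ultimately show "p a = p' a \<and> d a = d' a"
      using assms by (auto simp: monomial_def split: if_splits)
  qed
qed (auto simp: monomial_def fun_eq_iff)

lemma piS_monomial:
  "\<forall>a<n. d a \<noteq> 0 \<Longrightarrow> piS (monomial n p d) = monomial n p (\<lambda>_. 1)"
  by (auto simp: piS_def monomial_def fun_eq_iff)

lemma phi_monomial:
  assumes "\<forall>a<n. p a < n" "\<forall>a<n. d a \<noteq> 0"
  shows "phi n (monomial n p d) = (\<Prod>a<n. d a)"
  unfolding phi_def
proof (rule prod.cong[OF refl])
  fix a assume "a \<in> {..<n}"
  then have "(\<Prod>j<n. if monomial n p d a j = 0 then 1 else monomial n p d a j)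
      = (\<Prod>j<n. if j = p a then d a else 1)"
    using assms(2) by (intro prod.cong) (auto simp: monomial_def)
  also have "\<dots> = d a" using assms(1) \<open>a \<in> {..<n}\<close> by simp
  finally show "(\<Prod>j<n. if monomial n p d a j = 0 then 1 else monomial n p d a j) = d a" .
qed

lemma Grp_monomialE:
  assumes "w \<in> Grp r s n"
  obtains p d where "w = monomial n p d" "\<forall>a<n. p a < n" "\<forall>a<n. d a \<noteq> 0 \<and> d a ^ r = 1"
proof -
  define p where "p a = (THE j. j < n \<and> w a j \<noteq> 0)" for a
  define d where "d a = w a (p a)" for a
  have outside: "\<And>i j. n \<le> i \<or> n \<le> j \<Longrightarrow> w i j = 0"
    and rows: "\<And>i. i < n \<Longrightarrow> \<exists>!j. j < n \<and> w i j \<noteq> 0"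
    and roots: "\<And>i j. i < n \<Longrightarrow> j < n \<Longrightarrow> w i j \<noteq> 0 \<Longrightarrow> w i j ^ r = 1"
    using assms by (auto simp: Grp_def)
  have p: "p a < n \<and> w a (p a) \<noteq> 0" if "a < n" for a
    using theI'[OF rows[OF that]] unfolding p_def by blast
  have row: "w a b = (if b = p a then d a else 0)" if "a < n" "b < n" for a b
    using rows[OF that(1)] p[OF that(1)] that by (auto simp: d_def)
  have "w = monomial n p d"
  proof (intro ext)
    fix a b show "w a b = monomial n p d a b"
      using outside[of a b] row[of a b] by (cases "a < n \<and> b < n") (auto simp: monomial_def)
  qed
  moreover have "d a \<noteq> 0 \<and> d a ^ r = 1" if "a < n" for a
    using p[OF that] roots[of a "p a"] that by (simp add: d_def)
  ultimately show ?thesis using that p by blast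
qed

section \<open>Factorizations as monomial matrices\<close>

fun refl_perm :: "refl \<Rightarrow> nat \<Rightarrow> nat" where
  "refl_perm (Sig i j k) = id(i := j, j := i)"
| "refl_perm (Tau i k) = id"

fun refl_diag :: "nat \<Rightarrow> nat \<Rightarrow> refl \<Rightarrow> nat \<Rightarrow> complex" where
  "refl_diag r s (Sig i j k) = (\<lambda>a. if a = i then inverse (zeta r ^ k) else if a = j then zeta r ^ k else 1)"
| "refl_diag r s (Tau i k) = (\<lambda>a. if a = i then zeta r ^ (s * k) else 1)"

fun fact_perm :: "refl list \<Rightarrow> nat \<Rightarrow> nat" where
  "fact_perm [] = id"
| "fact_perm (x # xs) = refl_perm x \<circ> fact_perm xs"

fun fact_diag :: "nat \<Rightarrow> nat \<Rightarrow> refl list \<Rightarrow> nat \<Rightarrow> complex" where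
  "fact_diag r s [] = (\<lambda>_. 1)"
| "fact_diag r s (x # xs) = (\<lambda>a. fact_diag r s xs a * refl_diag r s x (fact_perm xs a))"

lemma refl_mat_monomial:
  "valid_refl r s n x \<Longrightarrow> refl_mat r s n x = monomial n (refl_perm x) (refl_diag r s x)"
  by (cases x) (auto simp: monomial_def fun_eq_iff)

lemma fact_perm_less: "set xs \<subseteq> Refl r s n \<Longrightarrow> a < n \<Longrightarrow> fact_perm xs a < n"
proof (induction xs arbitrary: a)
  case (Cons x xs)
  then show ?case by (cases x) (auto simp: Refl_def)
qed simp

lemma fact_prod_monomial:
  "set xs \<subseteq> Refl r s n \<Longrightarrow> fact_prod r s n xs = monomial n (fact_perm xs) (fact_diag r s xs)"
proof (induction xs)
  case Nil
  then show ?case by (simp add: fact_prod_def mat_one_monomial id_def)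
next
  case (Cons x xs)
  then have "valid_refl r s n x" by (simp add: Refl_def)
  then have "fact_prod r s n (x # xs)
      = mat_mult n (monomial n (fact_perm xs) (fact_diag r s xs)) (monomial n (refl_perm x) (refl_diag r s x))"
    using Cons by (simp add: fact_prod_def refl_mat_monomial)
  also have "\<dots> = monomial n (fact_perm (x # xs)) (fact_diag r s (x # xs))"
    using Cons.prems by (subst mat_mult_monomial) (auto intro: fact_perm_less)
  finally show ?case .
qed

lemma finite_Refl: "finite (Refl r s n)"
proof -
  let ?S = "(\<lambda>(i, j, k). Sig i j k) ` ({..<n} \<times> {..<n} \<times> {..<r})
    \<union> (\<lambda>(i, k). Tau i k) ` ({..<n} \<times> {..<r div s})"
  have "x \<in> ?S" if "x \<in> Refl r s n" for x
    using that by (cases x) (auto simp: Refl_def image_iff)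
  then have "Refl r s n \<subseteq> ?S" by blast
  then show ?thesis by (rule finite_subset) auto
qed

lemma refl_diag_root: "0 < r \<Longrightarrow> refl_diag r s x a ^ r = 1"
  by (cases x) (auto simp: zeta_power_root power_inverse)

lemma fact_diag_root: "0 < r \<Longrightarrow> fact_diag r s xs a ^ r = 1"
  by (induction xs arbitrary: a) (auto simp: refl_diag_root power_mult_distrib)

section \<open>Connected components of a factorization\<close>

definition reach :: "refl list \<Rightarrow> (nat \<times> nat) set" where
  "reach t = (fact_edges t \<union> (fact_edges t)\<inverse>)\<^sup>*"

definition component :: "refl list \<Rightarrow> nat \<Rightarrow> nat set" where
  "component t x = reach t `` {x}"

definition components :: "nat \<Rightarrow> refl list \<Rightarrow> nat set set" where
  "components n t = component t ` {..<n}"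

lemma fact_edges_simps [simp]:
  "fact_edges [] = {}"
  "fact_edges (Sig a b k # t) = insert (a, b) (fact_edges t)"
  "fact_edges (Tau a k # t) = fact_edges t"
  by (auto simp: fact_edges_def)

lemma reach_refl [simp]: "(u, u) \<in> reach t"
  by (simp add: reach_def)

lemma reach_sym: "(u, v) \<in> reach t \<Longrightarrow> (v, u) \<in> reach t"
  unfolding reach_def by (metis converse_Un converse_converse rtrancl_converseI sup_commute)

lemma reach_trans: "(u, v) \<in> reach t \<Longrightarrow> (v, w) \<in> reach t \<Longrightarrow> (u, w) \<in> reach t"
  unfolding reach_def by (rule rtrancl_trans)

lemma reach_Nil: "reach [] = Id"
  by (simp add: reach_def)

lemma reach_Tau [simp]: "reach (Tau a k # t) = reach t"
  by (simp add: reach_def)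

lemma reach_Sig:
  "(x, y) \<in> reach (Sig a b k # t) \<longleftrightarrow>
     (x, y) \<in> reach t \<or> ((x, a) \<in> reach t \<and> (b, y) \<in> reach t) \<or> ((x, b) \<in> reach t \<and> (a, y) \<in> reach t)"
    (is "_ \<longleftrightarrow> ?R x y")
proof
  let ?S = "fact_edges t \<union> (fact_edges t)\<inverse>"
  have edges: "fact_edges (Sig a b k # t) \<union> (fact_edges (Sig a b k # t))\<inverse> = ?S \<union> {(a, b), (b, a)}"
    by auto
  assume "(x, y) \<in> reach (Sig a b k # t)"
  then have "(x, y) \<in> (?S \<union> {(a, b), (b, a)})\<^sup>*"
    by (simp only: reach_def edges)
  then show "?R x y"
  proof (induction rule: rtrancl_induct)
    case (step y z)
    then show ?case
    proof (cases "(y, z) \<in> ?S")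
      case True
      then have "(y, z) \<in> reach t" unfolding reach_def by auto
      with step.IH show ?thesis using reach_trans by blast
    next
      case False
      with step.hyps(2) have "(y = a \<and> z = b) \<or> (y = b \<and> z = a)" by auto
      with step.IH show ?thesis using reach_trans reach_sym reach_refl by blast
    qed
  qed simp
next
  have "reach t \<subseteq> reach (Sig a b k # t)" unfolding reach_def by (rule rtrancl_mono) auto
  moreover have "(a, b) \<in> reach (Sig a b k # t)" "(b, a) \<in> reach (Sig a b k # t)"
    unfolding reach_def by auto
  ultimately show "?R x y \<Longrightarrow> (x, y) \<in> reach (Sig a b k # t)"
    using reach_trans by blast
qed

lemma reach_fact_perm: "(c, fact_perm t c) \<in> reach t"
proof (induction t arbitrary: c)
  case (Cons x t)
  show ?case
  proof (cases x)
    case (Sig a b k)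
    have "(c, fact_perm t c) \<in> reach (x # t)"
      using Cons.IH reach_Sig by (simp add: Sig)
    moreover have "(p, refl_perm x p) \<in> reach (x # t)" for p
      using reach_Sig[of p "refl_perm x p" a b k t] by (auto simp: Sig)
    ultimately show ?thesis using reach_trans by simp
  qed (use Cons.IH in simp)
qed simp

lemma reach_component_iff:
  "(a, b) \<in> reach t \<Longrightarrow> C \<in> components n t \<Longrightarrow> a \<in> C \<longleftrightarrow> b \<in> C"
  unfolding components_def component_def using reach_sym reach_trans by blast

lemma component_self [simp]: "x \<in> component t x"
  by (simp add: component_def)

lemma component_eq: "y \<in> component t x \<Longrightarrow> component t y = component t x"
  unfolding component_def using reach_sym[of _ _ t] reach_trans[of _ _ t] by blast

lemma component_Tau [simp]: "component (Tau a k # t) = component t"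
  by (simp add: component_def fun_eq_iff)

lemma components_Tau [simp]: "components n (Tau a k # t) = components n t"
  by (simp add: components_def)

lemma component_subset:
  assumes "set t \<subseteq> Refl r s n" "x < n"
  shows "component t x \<subseteq> {..<n}"
proof
  fix y assume "y \<in> component t x"
  then have "(x, y) \<in> (fact_edges t \<union> (fact_edges t)\<inverse>)\<^sup>*" by (simp add: component_def reach_def)
  moreover have "fact_edges t \<subseteq> {..<n} \<times> {..<n}"
    using assms(1) by (auto simp: fact_edges_def Refl_def)
  ultimately show "y \<in> {..<n}"
    by (induction rule: rtrancl_induct) (use assms(2) in auto)
qed

lemma finite_component: "set t \<subseteq> Refl r s n \<Longrightarrow> x < n \<Longrightarrow> finite (component t x)"
  by (rule finite_subset[OF component_subset]) auto

lemma component_Sig: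
  "component (Sig a b k # t) x =
     (if x \<in> component t a \<union> component t b then component t a \<union> component t b else component t x)"
proof (cases "x \<in> component t a \<union> component t b")
  case True
  have "(x, y) \<in> reach (Sig a b k # t) \<longleftrightarrow> (a, y) \<in> reach t \<or> (b, y) \<in> reach t" for y
  proof -
    consider (a) "(x, a) \<in> reach t" | (b) "(x, b) \<in> reach t"
      using True reach_sym by (auto simp: component_def)
    then show ?thesis
    proof cases
      case a
      then have "(x, z) \<in> reach t \<longleftrightarrow> (a, z) \<in> reach t" for z using reach_sym reach_trans by blast
      then show ?thesis by (auto simp: reach_Sig)
    next
      case b
      then have "(x, z) \<in> reach t \<longleftrightarrow> (b, z) \<in> reach t" for z using reach_sym reach_trans by blast
      then show ?thesis by (auto simp: reach_Sig)
    qed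
  qed
  with True show ?thesis by (auto simp: component_def)
next
  case False
  then have "(x, a) \<notin> reach t" "(x, b) \<notin> reach t" using reach_sym by (auto simp: component_def)
  with False show ?thesis by (auto simp: component_def reach_Sig)
qed

lemma component_Sig_reach:
  assumes "(a, b) \<in> reach t"
  shows "component (Sig a b k # t) = component t"
proof (rule ext)
  fix x
  have "component t b = component t a" using assms by (intro component_eq) (simp add: component_def)
  moreover have "x \<in> component t a \<Longrightarrow> component t x = component t a" by (rule component_eq)
  ultimately show "component (Sig a b k # t) x = component t x" by (simp add: component_Sig)
qed

lemma bij_betw_fact_perm: "set t \<subseteq> Refl r s n \<Longrightarrow> bij_betw (fact_perm t) {..<n} {..<n}"
proof (induction t)
  case (Cons x t)
  then have "valid_refl r s n x" by (simp add: Refl_def)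
  then have "bij_betw (refl_perm x) {..<n} {..<n}"
    by (cases x) (auto intro!: bij_betw_byWitness[where f' = "refl_perm x"])
  with Cons show ?case using bij_betw_trans by (fastforce simp: comp_def)
qed (simp add: bij_betw_def)

lemma prod_component_fact_perm:
  assumes "set t \<subseteq> Refl r s n" "x < n"
  shows "(\<Prod>c\<in>component t x. g (fact_perm t c)) = (\<Prod>c\<in>component t x. g c)"
proof -
  let ?C = "component t x"
  have "fact_perm t ` ?C \<subseteq> ?C"
    using reach_fact_perm reach_trans by (fastforce simp: component_def)
  moreover have inj: "inj_on (fact_perm t) ?C"
    using bij_betw_fact_perm[OF assms(1)] component_subset[OF assms]
    by (auto simp: bij_betw_def intro: inj_on_subset)
  ultimately have "fact_perm t ` ?C = ?C"
    using endo_inj_surj finite_component[OF assms] by blast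
  then show ?thesis using prod.reindex[OF inj, of g] by simp
qed

lemma card_components_Nil: "card (components n []) = n"
proof -
  have "components n [] = (\<lambda>x. {x}) ` {..<n}" by (auto simp: components_def component_def reach_Nil)
  then show ?thesis by (simp add: card_image)
qed

lemma components_Sig:
  assumes "a < n" "(a, b) \<notin> reach t"
  shows "components n (Sig a b k # t)
           = insert (component t a \<union> component t b) (components n t - {component t a, component t b})"
    (is "_ = insert (?A \<union> ?B) _")
proof -
  have others: "component t x \<notin> {?A, ?B} \<longleftrightarrow> x \<notin> ?A \<union> ?B" for x
    using component_eq[of x t a] component_eq[of x t b] component_self[of x t] by blast
  show ?thesis
  proof
    show "components n (Sig a b k # t) \<subseteq> insert (?A \<union> ?B) (components n t - {?A, ?B})"
      using others by (auto simp: components_def component_Sig simp del: insert_iff)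
  next
    have "?A \<union> ?B = component (Sig a b k # t) a" by (simp add: component_Sig)
    moreover have "component t x \<in> components n (Sig a b k # t)" if "x < n" "x \<notin> ?A \<union> ?B" for x
      using that image_eqI[of _ "component (Sig a b k # t)" x] by (simp add: components_def component_Sig)
    ultimately show "insert (?A \<union> ?B) (components n t - {?A, ?B}) \<subseteq> components n (Sig a b k # t)"
      using assms(1) others by (auto simp: components_def simp del: insert_iff)
  qed
qed

lemma component_disjoint:
  assumes "(a, b) \<notin> reach t"
  shows "component t a \<noteq> component t b" "component t a \<inter> component t b = {}"
proof -
  have "b \<notin> component t a" using assms by (simp add: component_def)
  then show ne: "component t a \<noteq> component t b" using component_self[of b t] by blast
  show "component t a \<inter> component t b = {}"
  proof (rule ccontr)
    assume "component t a \<inter> component t b \<noteq> {}"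
    then obtain y where "y \<in> component t a" "y \<in> component t b" by blast
    then have "component t a = component t b" using component_eq by metis
    with ne show False ..
  qed
qed

lemma card_components_Sig:
  assumes "a < n" "b < n" "(a, b) \<notin> reach t"
  shows "card (components n (Sig a b k # t)) + 1 = card (components n t)"
proof -
  let ?A = "component t a" and ?B = "component t b"
  have "?A \<noteq> ?B" using component_disjoint[OF assms(3)] by blast
  have "?A \<union> ?B \<notin> components n t"
  proof
    assume "?A \<union> ?B \<in> components n t"
    then obtain x where x: "?A \<union> ?B = component t x" by (auto simp: components_def)
    then have "a \<in> component t x" "b \<in> component t x"
      using component_self[of a t] component_self[of b t] by blast+
    then have "?A = component t x" "?B = component t x" by (simp_all add: component_eq)
    with \<open>?A \<noteq> ?B\<close> show False by simp
  qed
  moreover have "{?A, ?B} \<subseteq> components n t" using assms(1,2) by (auto simp: components_def)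
  moreover have "finite (components n t)" by (simp add: components_def)
  ultimately show ?thesis
    using \<open>?A \<noteq> ?B\<close> card_mono[of "components n t" "{?A, ?B}"]
    by (simp add: components_Sig[OF assms(1,3)] card_Diff_subset)
qed

lemma components_connected:
  assumes "set t \<subseteq> Refl r s n" "connected_fact n t" "0 < n"
  shows "components n t = {{..<n}}"
proof -
  have "component t x = {..<n}" if "x < n" for x
    using component_subset[OF assms(1) that] assms(2) that
    unfolding connected_fact_def component_def reach_def by auto
  then show ?thesis using assms(3) by (auto simp: components_def)
qed

section \<open>Counting the labelings of a factorization shape\<close>

fun tau_factor :: "nat \<Rightarrow> nat \<Rightarrow> nat set \<Rightarrow> refl \<Rightarrow> complex" where
  "tau_factor r s C (Sig i j k) = 1"
| "tau_factor r s C (Tau i k) = (if i \<in> C then zeta r ^ (s * k) else 1)"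

definition tau_weight :: "nat \<Rightarrow> nat \<Rightarrow> refl list \<Rightarrow> nat set \<Rightarrow> complex" where
  "tau_weight r s t C = prod_list (map (tau_factor r s C) t)"

lemma tau_weight_simps [simp]:
  "tau_weight r s [] C = 1"
  "tau_weight r s (Sig a b k # t) C = tau_weight r s t C"
  "tau_weight r s (Tau a k # t) C = (if a \<in> C then zeta r ^ (s * k) else 1) * tau_weight r s t C"
  by (simp_all add: tau_weight_def)

lemma tau_weight_Un: "A \<inter> B = {} \<Longrightarrow> tau_weight r s t (A \<union> B) = tau_weight r s t A * tau_weight r s t B"
proof (induction t)
  case (Cons x t)
  then show ?case by (cases x) auto
qed simp

lemma tau_weight_root: "0 < r \<Longrightarrow> tau_weight r s t C ^ r = 1"
proof (induction t)
  case (Cons x t)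
  then show ?case by (cases x) (auto simp: zeta_power_root power_mult_distrib)
qed simp

fun relabel :: "refl list \<Rightarrow> nat list \<Rightarrow> refl list" where
  "relabel [] ks = []"
| "relabel (Sig i j k # t) ks = Sig i j (hd ks) # relabel t (tl ks)"
| "relabel (Tau i k # t) ks = Tau i k # relabel t ks"

abbreviation num_sig :: "refl list \<Rightarrow> nat" where
  "num_sig t \<equiv> length (filter is_Sig t)"

lemma fact_perm_relabel [simp]: "fact_perm (relabel t ks) = fact_perm t"
  by (induction t ks rule: relabel.induct) auto

lemma relabel_Refl:
  "set t \<subseteq> Refl r s n \<Longrightarrow> length ks = num_sig t \<Longrightarrow> set ks \<subseteq> {..<r} \<Longrightarrow>
    set (relabel t ks) \<subseteq> Refl r s n"
proof (induction t ks rule: relabel.induct)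
  case (2 i j k t ks)
  then show ?case by (cases ks) (auto simp: Refl_def)
qed (auto simp: Refl_def)

definition labelings :: "nat \<Rightarrow> nat \<Rightarrow> nat \<Rightarrow> refl list \<Rightarrow> (nat \<Rightarrow> complex) \<Rightarrow> nat list set" where
  "labelings r s n t D =
     {ks. length ks = num_sig t \<and> set ks \<subseteq> {..<r} \<and> (\<forall>c<n. fact_diag r s (relabel t ks) c = D c)}"

definition admissible :: "nat \<Rightarrow> nat \<Rightarrow> nat \<Rightarrow> refl list \<Rightarrow> (nat \<Rightarrow> complex) \<Rightarrow> bool" where
  "admissible r s n t D \<longleftrightarrow> (\<forall>C\<in>components n t. (\<Prod>c\<in>C. D c) = tau_weight r s t C)"

definition peel_diag :: "nat \<Rightarrow> nat \<Rightarrow> refl \<Rightarrow> refl list \<Rightarrow> (nat \<Rightarrow> complex) \<Rightarrow> nat \<Rightarrow> complex" where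
  "peel_diag r s x t D c = D c * inverse (refl_diag r s x (fact_perm t c))"

lemma peel_diag_root:
  "0 < r \<Longrightarrow> \<forall>c<n. D c ^ r = 1 \<Longrightarrow> \<forall>c<n. peel_diag r s x t D c ^ r = 1"
  by (simp add: peel_diag_def refl_diag_root power_mult_distrib power_inverse)

lemma peel_diag_relabel [simp]: "peel_diag r s x (relabel t ks) = peel_diag r s x t"
  by (simp add: peel_diag_def fun_eq_iff)

lemma finite_labelings: "finite (labelings r s n t D)"
  by (rule finite_subset[OF _ finite_lists_length_eq[of "{..<r}" "num_sig t"]])
    (auto simp: labelings_def)

lemma fact_diag_Cons_eq_iff:
  "0 < r \<Longrightarrow> fact_diag r s (x # t) c = D c \<longleftrightarrow> fact_diag r s t c = peel_diag r s x t D c"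
  using root_unity_nonzero[OF _ refl_diag_root, of r s x "fact_perm t c"]
  by (auto simp: peel_diag_def field_simps)

lemma labelings_Tau:
  "0 < r \<Longrightarrow> labelings r s n (Tau a k # t) D = labelings r s n t (peel_diag r s (Tau a k) t D)"
  by (auto simp: labelings_def fact_diag_Cons_eq_iff simp del: fact_diag.simps)

lemma card_labelings_Sig:
  assumes "0 < r"
  shows "card (labelings r s n (Sig a b k0 # t) D)
           = (\<Sum>k<r. card (labelings r s n t (peel_diag r s (Sig a b k) t D)))"
proof -
  have "labelings r s n (Sig a b k0 # t) D
      = (\<lambda>(k, ks). k # ks) ` (SIGMA k:{..<r}. labelings r s n t (peel_diag r s (Sig a b k) t D))"
  proof (intro set_eqI iffI)
    fix ks assume ks: "ks \<in> labelings r s n (Sig a b k0 # t) D"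
    then obtain k ks' where "ks = k # ks'" by (cases ks) (auto simp: labelings_def)
    with ks assms show "ks \<in> (\<lambda>(k, ks). k # ks) ` (SIGMA k:{..<r}. labelings r s n t (peel_diag r s (Sig a b k) t D))"
      by (auto simp: labelings_def fact_diag_Cons_eq_iff simp del: fact_diag.simps)
  qed (use assms in \<open>auto simp: labelings_def fact_diag_Cons_eq_iff simp del: fact_diag.simps\<close>)
  moreover have "inj_on (\<lambda>(k, ks). k # ks) X" for X :: "(nat \<times> nat list) set"
    by (auto simp: inj_on_def)
  ultimately show ?thesis
    by (simp add: card_image card_SigmaI finite_labelings)
qed

lemma prod_peel_diag:
  assumes "set t \<subseteq> Refl r s n" "C \<in> components n t"
  shows "(\<Prod>c\<in>C. peel_diag r s x t D c) = (\<Prod>c\<in>C. D c) * (\<Prod>c\<in>C. inverse (refl_diag r s x c))"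
proof -
  obtain x0 where "x0 < n" "C = component t x0" using assms(2) by (auto simp: components_def)
  have "(\<Prod>c\<in>C. peel_diag r s x t D c)
      = (\<Prod>c\<in>C. D c) * (\<Prod>c\<in>C. inverse (refl_diag r s x (fact_perm t c)))"
    by (simp add: peel_diag_def prod.distrib)
  also have "(\<Prod>c\<in>C. inverse (refl_diag r s x (fact_perm t c))) = (\<Prod>c\<in>C. inverse (refl_diag r s x c))"
    using prod_component_fact_perm[OF assms(1) \<open>x0 < n\<close>] \<open>C = component t x0\<close> by simp
  finally show ?thesis .
qed

lemma prod_inverse_refl_diag_Tau:
  "finite C \<Longrightarrow> (\<Prod>c\<in>C. inverse (refl_diag r s (Tau a k) c)) = (if a \<in> C then inverse (zeta r ^ (s * k)) else 1)"
  by (simp add: if_distrib[of inverse] prod.delta' cong: if_cong)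

lemma prod_inverse_refl_diag_Sig:
  assumes "finite C" "a \<noteq> b"
  shows "(\<Prod>c\<in>C. inverse (refl_diag r s (Sig a b k) c))
           = (if a \<in> C then zeta r ^ k else 1) * (if b \<in> C then inverse (zeta r ^ k) else 1)"
proof -
  have "(\<Prod>c\<in>C. inverse (refl_diag r s (Sig a b k) c))
      = (\<Prod>c\<in>C. (if c = a then zeta r ^ k else 1) * (if c = b then inverse (zeta r ^ k) else 1))"
    using assms(2) by (intro prod.cong) auto
  then show ?thesis using assms(1) by (simp add: prod.distrib prod.delta')
qed

lemma finite_mem_components: "set t \<subseteq> Refl r s n \<Longrightarrow> C \<in> components n t \<Longrightarrow> finite C"
  by (auto simp: components_def finite_component)

lemma admissible_Tau:
  assumes "set (Tau a k # t) \<subseteq> Refl r s n"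
  shows "admissible r s n (Tau a k # t) D \<longleftrightarrow> admissible r s n t (peel_diag r s (Tau a k) t D)"
proof -
  have t: "set t \<subseteq> Refl r s n" using assms by simp
  have cancel: "z \<noteq> 0 \<Longrightarrow> P = z * T \<longleftrightarrow> P * inverse z = T" for P z T :: complex
    by (auto simp: field_simps)
  have "(\<Prod>c\<in>C. D c) = tau_weight r s (Tau a k # t) C
      \<longleftrightarrow> (\<Prod>c\<in>C. peel_diag r s (Tau a k) t D c) = tau_weight r s t C"
    if "C \<in> components n t" for C
    using prod_peel_diag[OF t that] prod_inverse_refl_diag_Tau[OF finite_mem_components[OF t that]]
      cancel[of "zeta r ^ (s * k)"]
    by simp
  then show ?thesis by (simp add: admissible_def)
qed

lemma admissible_Sig_reach:
  assumes "set (Sig a b k0 # t) \<subseteq> Refl r s n" "(a, b) \<in> reach t"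
  shows "admissible r s n t (peel_diag r s (Sig a b k) t D) \<longleftrightarrow> admissible r s n (Sig a b k0 # t) D"
proof -
  have t: "set t \<subseteq> Refl r s n" and "a \<noteq> b" using assms(1) by (auto simp: Refl_def)
  have "(\<Prod>c\<in>C. peel_diag r s (Sig a b k) t D c) = (\<Prod>c\<in>C. D c)" if "C \<in> components n t" for C
    using prod_peel_diag[OF t that] reach_component_iff[OF assms(2) that]
      prod_inverse_refl_diag_Sig[OF finite_mem_components[OF t that] \<open>a \<noteq> b\<close>]
    by simp
  moreover have "components n (Sig a b k0 # t) = components n t"
    by (simp add: components_def component_Sig_reach[OF assms(2)])
  ultimately show ?thesis by (simp add: admissible_def)
qed

lemma card_zeta_solutions:
  assumes "0 < r" "X ^ r = 1" "A ^ r = 1"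
  shows "card {k. k < r \<and> X * zeta r ^ k = A \<and> Y * inverse (zeta r ^ k) = B}
           = (if X * Y = A * B then 1 else 0)"
proof -
  have "X \<noteq> 0" using assms by (simp add: root_unity_nonzero)
  have "(A / X) ^ r = 1" using assms by (simp add: power_divide)
  then obtain k0 where k0: "k0 < r" "zeta r ^ k0 = A / X"
    and unique: "\<And>k. k < r \<Longrightarrow> zeta r ^ k = A / X \<Longrightarrow> k = k0"
    using ex1_zeta_power[OF assms(1)] by metis
  have first: "X * z = A \<longleftrightarrow> z = A / X" for z
    using \<open>X \<noteq> 0\<close> by (auto simp: field_simps)
  have "A \<noteq> 0" using assms by (simp add: root_unity_nonzero)
  have second: "Y * inverse z = B \<longleftrightarrow> X * Y = A * B" if "z = A / X" for z
    using that \<open>X \<noteq> 0\<close> \<open>A \<noteq> 0\<close> by (auto simp: field_simps)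
  have "k \<in> {k. k < r \<and> X * zeta r ^ k = A \<and> Y * inverse (zeta r ^ k) = B}
      \<longleftrightarrow> k = k0 \<and> X * Y = A * B" for k
  proof -
    have "k \<in> {k. k < r \<and> X * zeta r ^ k = A \<and> Y * inverse (zeta r ^ k) = B}
        \<longleftrightarrow> k < r \<and> zeta r ^ k = A / X \<and> Y * inverse (zeta r ^ k) = B"
      using first[of "zeta r ^ k"] by simp
    also have "\<dots> \<longleftrightarrow> k = k0 \<and> Y * inverse (zeta r ^ k0) = B"
      using k0 unique[of k] by blast
    also have "\<dots> \<longleftrightarrow> k = k0 \<and> X * Y = A * B"
      using second[OF k0(2)] by simp
    finally show ?thesis .
  qed
  then have "{k. k < r \<and> X * zeta r ^ k = A \<and> Y * inverse (zeta r ^ k) = B}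
      = (if X * Y = A * B then {k0} else {})"
    by auto
  then show ?thesis by simp
qed

lemma admissible_Sig_unlinked:
  assumes "set (Sig a b k0 # t) \<subseteq> Refl r s n" "(a, b) \<notin> reach t"
  shows "admissible r s n (Sig a b k0 # t) D \<longleftrightarrow>
           (\<forall>C\<in>components n t - {component t a, component t b}. (\<Prod>c\<in>C. D c) = tau_weight r s t C)
           \<and> (\<Prod>c\<in>component t a. D c) * (\<Prod>c\<in>component t b. D c)
               = tau_weight r s t (component t a) * tau_weight r s t (component t b)"
proof -
  have t: "set t \<subseteq> Refl r s n" and "a < n" "b < n" using assms(1) by (auto simp: Refl_def)
  then show ?thesis
    using component_disjoint(2)[OF assms(2)] finite_component[OF t \<open>a < n\<close>] finite_component[OF t \<open>b < n\<close>]
    by (auto simp: admissible_def components_Sig[OF \<open>a < n\<close> assms(2)] prod.union_disjoint tau_weight_Un)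
qed

lemma admissible_peel_Sig_unlinked:
  assumes "set (Sig a b k0 # t) \<subseteq> Refl r s n" "(a, b) \<notin> reach t"
  shows "admissible r s n t (peel_diag r s (Sig a b k) t D) \<longleftrightarrow>
           (\<forall>C\<in>components n t - {component t a, component t b}. (\<Prod>c\<in>C. D c) = tau_weight r s t C)
           \<and> (\<Prod>c\<in>component t a. D c) * zeta r ^ k = tau_weight r s t (component t a)
           \<and> (\<Prod>c\<in>component t b. D c) * inverse (zeta r ^ k) = tau_weight r s t (component t b)"
proof -
  have t: "set t \<subseteq> Refl r s n" and "a < n" "b < n" "a \<noteq> b" using assms(1) by (auto simp: Refl_def)
  let ?A = "component t a" and ?B = "component t b"
  have A: "?A \<in> components n t" and B: "?B \<in> components n t"
    using \<open>a < n\<close> \<open>b < n\<close> by (auto simp: components_def)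
  have "a \<notin> ?B" "b \<notin> ?A"
    using component_disjoint(2)[OF assms(2)] component_self[of a t] component_self[of b t] by blast+
  have away: "a \<notin> C \<and> b \<notin> C" if "C \<in> components n t - {?A, ?B}" for C
    using that component_eq[of a t] component_eq[of b t] by (auto simp: components_def)
  have peel: "(\<Prod>c\<in>C. peel_diag r s (Sig a b k) t D c)
      = (\<Prod>c\<in>C. D c) * ((if a \<in> C then zeta r ^ k else 1) * (if b \<in> C then inverse (zeta r ^ k) else 1))"
    if "C \<in> components n t" for C
    using prod_peel_diag[OF t that] prod_inverse_refl_diag_Sig[OF finite_mem_components[OF t that] \<open>a \<noteq> b\<close>]
    by simp
  have "(\<forall>C\<in>components n t. F C) \<longleftrightarrow> F ?A \<and> F ?B \<and> (\<forall>C\<in>components n t - {?A, ?B}. F C)" for F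
    using A B by blast
  with peel[OF A] peel[OF B] \<open>a \<notin> ?B\<close> \<open>b \<notin> ?A\<close> show ?thesis
    using peel away by (auto simp: admissible_def)
qed

lemma card_admissible_Sig_unlinked:
  assumes "0 < r" "set (Sig a b k0 # t) \<subseteq> Refl r s n" "(a, b) \<notin> reach t" "\<forall>c<n. D c ^ r = 1"
  shows "card {k \<in> {..<r}. admissible r s n t (peel_diag r s (Sig a b k) t D)}
           = (if admissible r s n (Sig a b k0 # t) D then 1 else 0)"
proof -
  have t: "set t \<subseteq> Refl r s n" and "a < n" using assms(2) by (auto simp: Refl_def)
  let ?P = "\<lambda>C. \<Prod>c\<in>C. D c" and ?T = "tau_weight r s t"
  let ?A = "component t a" and ?B = "component t b"
  let ?Q = "\<forall>C\<in>components n t - {?A, ?B}. ?P C = ?T C"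
  have "?P ?A ^ r = 1"
    by (rule prod_root_unity) (use component_subset[OF t \<open>a < n\<close>] assms(4) in auto)
  have "{k \<in> {..<r}. admissible r s n t (peel_diag r s (Sig a b k) t D)}
      = (if ?Q then {k. k < r \<and> ?P ?A * zeta r ^ k = ?T ?A \<and> ?P ?B * inverse (zeta r ^ k) = ?T ?B} else {})"
    by (auto simp: admissible_peel_Sig_unlinked[OF assms(2,3)])
  then have "card {k \<in> {..<r}. admissible r s n t (peel_diag r s (Sig a b k) t D)}
      = (if ?Q then card {k. k < r \<and> ?P ?A * zeta r ^ k = ?T ?A \<and> ?P ?B * inverse (zeta r ^ k) = ?T ?B} else 0)"
    by simp
  also have "\<dots> = (if ?Q \<and> ?P ?A * ?P ?B = ?T ?A * ?T ?B then 1 else 0)"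
    using card_zeta_solutions[OF assms(1) \<open>?P ?A ^ r = 1\<close> tau_weight_root[OF assms(1), of s t ?A]]
    by simp
  finally show ?thesis by (simp add: admissible_Sig_unlinked[OF assms(2,3)])
qed

lemma admissible_Nil: "admissible r s n [] D \<longleftrightarrow> (\<forall>c<n. D c = 1)"
proof -
  have "components n [] = (\<lambda>c. {c}) ` {..<n}"
    by (auto simp: components_def component_def reach_Nil)
  then show ?thesis by (auto simp: admissible_def)
qed

lemma labelings_Nil: "labelings r s n [] D = (if \<forall>c<n. D c = 1 then {[]} else {})"
  by (auto simp: labelings_def)

lemma card_admissible_Sig:
  assumes "0 < r" "set (Sig a b k0 # t) \<subseteq> Refl r s n" "\<forall>c<n. D c ^ r = 1"
  shows "card {k \<in> {..<r}. admissible r s n t (peel_diag r s (Sig a b k) t D)}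
           * r ^ (num_sig t + card (components n t))
         = (if admissible r s n (Sig a b k0 # t) D
            then r ^ (num_sig (Sig a b k0 # t) + card (components n (Sig a b k0 # t))) else 0)"
proof (cases "(a, b) \<in> reach t")
  case True
  then have "{k \<in> {..<r}. admissible r s n t (peel_diag r s (Sig a b k) t D)}
      = (if admissible r s n (Sig a b k0 # t) D then {..<r} else {})"
    using admissible_Sig_reach[OF assms(2)] by auto
  moreover have "components n (Sig a b k0 # t) = components n t"
    by (simp add: components_def component_Sig_reach[OF True])
  ultimately show ?thesis by simp
next
  case False
  have "a < n" "b < n" using assms(2) by (auto simp: Refl_def)
  then have "num_sig t + card (components n t) = num_sig (Sig a b k0 # t) + card (components n (Sig a b k0 # t))"
    using card_components_Sig[OF _ _ False, of n k0] by simp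
  then show ?thesis
    using card_admissible_Sig_unlinked[OF assms(1,2) False assms(3)] by simp
qed

lemma card_labelings:
  assumes "0 < r"
  shows "set t \<subseteq> Refl r s n \<Longrightarrow> \<forall>c<n. D c ^ r = 1 \<Longrightarrow>
    card (labelings r s n t D) * r ^ n
      = (if admissible r s n t D then r ^ (num_sig t + card (components n t)) else 0)"
proof (induction t arbitrary: D)
  case Nil
  then show ?case
    by (cases "\<forall>c<n. D c = 1") (auto simp: admissible_Nil labelings_Nil card_components_Nil)
next
  case (Cons x t)
  then have t: "set t \<subseteq> Refl r s n" by simp
  note IH = Cons.IH[OF t peel_diag_root[OF assms Cons.prems(2)]]
  show ?case
  proof (cases x)
    case (Tau a k)
    then show ?thesis
      using IH Cons.prems(1) by (simp add: labelings_Tau[OF assms] admissible_Tau)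
  next
    case (Sig a b k0)
    have "card (labelings r s n (x # t) D) * r ^ n
        = (\<Sum>k<r. card (labelings r s n t (peel_diag r s (Sig a b k) t D)) * r ^ n)"
      by (simp add: Sig card_labelings_Sig[OF assms] sum_distrib_right)
    also have "\<dots> = card {k \<in> {..<r}. admissible r s n t (peel_diag r s (Sig a b k) t D)}
        * r ^ (num_sig t + card (components n t))"
      by (simp add: IH sum.inter_filter[symmetric])
    finally show ?thesis
      using card_admissible_Sig[OF assms Cons.prems[unfolded Sig]] by (simp add: Sig)
  qed
qed

section \<open>Factorizations as labelled shapes\<close>

fun unlabel :: "refl \<Rightarrow> refl" where
  "unlabel (Sig i j k) = Sig i j 0"
| "unlabel (Tau i k) = Tau i k"

fun sig_labels :: "refl list \<Rightarrow> nat list" where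
  "sig_labels [] = []"
| "sig_labels (Sig i j k # xs) = k # sig_labels xs"
| "sig_labels (Tau i k # xs) = sig_labels xs"

definition sig_refls :: "nat \<Rightarrow> refl set" where
  "sig_refls n = {Sig i j 0 | i j. i < j \<and> j < n}"

definition tau_refls :: "nat \<Rightarrow> nat \<Rightarrow> nat \<Rightarrow> refl set" where
  "tau_refls r s n = {x \<in> Refl r s n. \<not> is_Sig x}"

definition connected_shapes :: "nat \<Rightarrow> nat \<Rightarrow> nat \<Rightarrow> nat \<Rightarrow> nat \<Rightarrow> refl list set" where
  "connected_shapes r s n m1 m2 = {t. set t \<subseteq> sig_refls n \<union> tau_refls r s n \<and> connected_fact n t
     \<and> num_sig t = m1 \<and> length (filter (\<lambda>x. \<not> is_Sig x) t) = m2}"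

lemma Refl_1_1: "Refl 1 1 n = sig_refls n"
proof -
  have "valid_refl 1 1 n x \<longleftrightarrow> (\<exists>i j. x = Sig i j 0 \<and> i < j \<and> j < n)" for x
    by (cases x) auto
  then show ?thesis by (auto simp: Refl_def sig_refls_def)
qed

lemma relabel_unlabel: "relabel (map unlabel xs) (sig_labels xs) = xs"
proof (induction xs)
  case (Cons x xs)
  then show ?case by (cases x) auto
qed simp

lemma unlabel_relabel: "map unlabel (relabel t ks) = map unlabel t"
  by (induction t ks rule: relabel.induct) auto

lemma sig_labels_relabel: "length ks = num_sig t \<Longrightarrow> sig_labels (relabel t ks) = ks"
proof (induction t ks rule: relabel.induct)
  case (2 i j k t ks)
  then show ?case by (cases ks) auto
qed auto

lemma is_Sig_unlabel [simp]: "is_Sig (unlabel x) = is_Sig x"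
  by (cases x) auto

lemma length_sig_labels: "length (sig_labels xs) = num_sig xs"
proof (induction xs)
  case (Cons x xs)
  then show ?case by (cases x) auto
qed simp

lemma fact_edges_unlabel [simp]: "fact_edges (map unlabel xs) = fact_edges xs"
proof (induction xs)
  case (Cons x xs)
  then show ?case by (cases x) auto
qed simp

lemma length_relabel [simp]: "length (relabel t ks) = length t"
  by (induction t ks rule: relabel.induct) auto

lemma fact_edges_relabel [simp]: "fact_edges (relabel t ks) = fact_edges t"
  by (induction t ks rule: relabel.induct) auto

lemma filter_relabel:
  "length (filter P (relabel t ks)) = length (filter P t)" if "\<And>x. P x \<longleftrightarrow> P (unlabel x)"
proof -
  have "length (filter P (relabel t ks)) = length (filter P (map unlabel (relabel t ks)))"
    using that by (simp add: filter_map o_def)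
  also have "\<dots> = length (filter P t)"
    using that by (simp add: unlabel_relabel filter_map o_def)
  finally show ?thesis .
qed

lemma unlabel_Refl:
  "0 < r \<Longrightarrow> x \<in> Refl r s n \<Longrightarrow> unlabel x \<in> sig_refls n \<union> tau_refls r s n"
  by (cases x) (auto simp: Refl_def sig_refls_def tau_refls_def)

lemma shape_alphabet_subset_Refl: "0 < r \<Longrightarrow> sig_refls n \<union> tau_refls r s n \<subseteq> Refl r s n"
  by (auto simp: sig_refls_def tau_refls_def Refl_def)

lemma map_unlabel_shape: "set t \<subseteq> sig_refls n \<union> tau_refls r s n \<Longrightarrow> map unlabel t = t"
proof (induction t)
  case (Cons x t)
  then show ?case by (cases x) (auto simp: sig_refls_def tau_refls_def)
qed simp

lemma sig_labels_less: "set xs \<subseteq> Refl r s n \<Longrightarrow> set (sig_labels xs) \<subseteq> {..<r}"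
proof (induction xs)
  case (Cons x xs)
  then show ?case by (cases x) (auto simp: Refl_def)
qed simp

lemma length_connected_shape: "t \<in> connected_shapes r s n m1 m2 \<Longrightarrow> length t = m1 + m2"
  using sum_length_filter_compl[of is_Sig t] by (simp add: connected_shapes_def)

lemma finite_connected_shapes:
  assumes "0 < r"
  shows "finite (connected_shapes r s n m1 m2)"
proof (rule finite_subset)
  show "connected_shapes r s n m1 m2 \<subseteq> {xs. set xs \<subseteq> Refl r s n \<and> length xs = m1 + m2}"
  proof
    fix t assume t: "t \<in> connected_shapes r s n m1 m2"
    then have "set t \<subseteq> sig_refls n \<union> tau_refls r s n" by (simp add: connected_shapes_def)
    with t show "t \<in> {xs. set xs \<subseteq> Refl r s n \<and> length xs = m1 + m2}"
      using shape_alphabet_subset_Refl[OF assms] length_connected_shape by blast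
  qed
qed (rule finite_lists_length_eq[OF finite_Refl])

definition relabelings :: "nat \<Rightarrow> nat \<Rightarrow> nat \<Rightarrow> refl list \<Rightarrow> cmat \<Rightarrow> nat list set" where
  "relabelings r s n t w = {ks. length ks = num_sig t \<and> set ks \<subseteq> {..<r} \<and> fact_prod r s n (relabel t ks) = w}"

lemma finite_relabelings: "finite (relabelings r s n t w)"
  by (rule finite_subset[OF _ finite_lists_length_eq[of "{..<r}" "num_sig t"]]) (auto simp: relabelings_def)

lemma bij_betw_shape_labels:
  assumes "0 < r"
  shows "bij_betw (\<lambda>xs. (map unlabel xs, sig_labels xs))
    {xs \<in> factorizations r s n (m1 + m2) w. connected_fact n xs
       \<and> num_sig xs = m1 \<and> length (filter (\<lambda>x. \<not> is_Sig x) xs) = m2}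
    (SIGMA t:connected_shapes r s n m1 m2. relabelings r s n t w)"
    (is "bij_betw _ ?F (Sigma ?T ?K)")
proof (rule bij_betw_byWitness[where f' = "\<lambda>(t, ks). relabel t ks"])
  show "\<forall>xs\<in>?F. (\<lambda>(t, ks). relabel t ks) (map unlabel xs, sig_labels xs) = xs"
    by (simp add: relabel_unlabel)
  show "\<forall>p\<in>Sigma ?T ?K. (\<lambda>xs. (map unlabel xs, sig_labels xs)) ((\<lambda>(t, ks). relabel t ks) p) = p"
    by (auto simp: relabelings_def connected_shapes_def unlabel_relabel sig_labels_relabel map_unlabel_shape)
  show "(\<lambda>xs. (map unlabel xs, sig_labels xs)) ` ?F \<subseteq> Sigma ?T ?K"
  proof (rule image_subsetI)
    fix xs assume xs: "xs \<in> ?F"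
    then have "set xs \<subseteq> Refl r s n" by (simp add: factorizations_def)
    then have "set (map unlabel xs) \<subseteq> sig_refls n \<union> tau_refls r s n" "set (sig_labels xs) \<subseteq> {..<r}"
      using unlabel_Refl[OF assms] sig_labels_less by auto
    with xs show "(map unlabel xs, sig_labels xs) \<in> Sigma ?T ?K"
      by (auto simp: factorizations_def connected_shapes_def relabelings_def connected_fact_def filter_map o_def
          length_sig_labels relabel_unlabel)
  qed
  show "(\<lambda>(t, ks). relabel t ks) ` Sigma ?T ?K \<subseteq> ?F"
  proof (rule image_subsetI)
    fix p assume "p \<in> Sigma ?T ?K"
    then obtain t ks where "p = (t, ks)" "t \<in> ?T" "ks \<in> ?K t" by blast
    then have "set (relabel t ks) \<subseteq> Refl r s n"
      using relabel_Refl[of t r s n ks] shape_alphabet_subset_Refl[OF assms, where s = s and n = n]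
      by (auto simp: connected_shapes_def relabelings_def)
    moreover have "length (relabel t ks) = m1 + m2"
      using length_connected_shape[OF \<open>t \<in> ?T\<close>] by simp
    ultimately show "(\<lambda>(t, ks). relabel t ks) p \<in> ?F"
      using \<open>p = (t, ks)\<close> \<open>t \<in> ?T\<close> \<open>ks \<in> ?K t\<close>
      by (auto simp: factorizations_def connected_shapes_def relabelings_def connected_fact_def filter_relabel)
  qed
qed

lemma conn_num2_eq_sum_relabelings:
  assumes "0 < r"
  shows "conn_num2 r s n m1 m2 w = (\<Sum>t\<in>connected_shapes r s n m1 m2. card (relabelings r s n t w))"
  unfolding conn_num2_def bij_betw_same_card[OF bij_betw_shape_labels[OF assms]]
  using finite_connected_shapes[OF assms] finite_relabelings by (simp add: card_SigmaI)

lemma card_relabelings_monomial: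
  assumes "0 < r" "0 < n" "t \<in> connected_shapes r s n m1 m2" "\<forall>a<n. p a < n" "\<forall>a<n. d a ^ r = 1"
  shows "card (relabelings r s n t (monomial n p d)) * r ^ n
         = (if (\<forall>c<n. fact_perm t c = p c) \<and> tau_weight r s t {..<n} = (\<Prod>c<n. d c) then r ^ (m1 + 1) else 0)"
proof -
  have t: "set t \<subseteq> Refl r s n"
    using assms(3) shape_alphabet_subset_Refl[OF assms(1), where s = s and n = n] by (auto simp: connected_shapes_def)
  have "num_sig t = m1" "connected_fact n t" using assms(3) by (auto simp: connected_shapes_def)
  have nonzero: "\<forall>a<n. d a \<noteq> 0" "\<forall>a<n. fact_diag r s xs a \<noteq> 0" for xs
    using assms(1,5) fact_diag_root[OF assms(1)] root_unity_nonzero[OF assms(1)] by blast+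
  have "fact_prod r s n (relabel t ks) = monomial n p d
      \<longleftrightarrow> (\<forall>c<n. fact_perm t c = p c) \<and> (\<forall>c<n. fact_diag r s (relabel t ks) c = d c)"
    if "length ks = num_sig t" "set ks \<subseteq> {..<r}" for ks
    using fact_prod_monomial[OF relabel_Refl[OF t that]] fact_perm_less[OF t] assms(4) nonzero
    by (auto simp: monomial_eq_iff)
  then have relabelings: "relabelings r s n t (monomial n p d)
      = (if \<forall>c<n. fact_perm t c = p c then labelings r s n t d else {})"
    by (auto simp: relabelings_def labelings_def)
  have count: "card (labelings r s n t d) * r ^ n
      = (if tau_weight r s t {..<n} = (\<Prod>c<n. d c) then r ^ (m1 + 1) else 0)"
    using card_labelings[OF assms(1) t assms(5)] \<open>num_sig t = m1\<close>
    by (auto simp: admissible_def components_connected[OF t \<open>connected_fact n t\<close> assms(2)])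
  show ?thesis unfolding relabelings by (cases "\<forall>c<n. fact_perm t c = p c") (auto simp: count)
qed

lemma conn_num2_eq_card_shapes:
  assumes "0 < r" "0 < n" "\<forall>a<n. p a < n" "\<forall>a<n. d a ^ r = 1"
  shows "conn_num2 r s n m1 m2 (monomial n p d) * r ^ n
    = card {t \<in> connected_shapes r s n m1 m2. (\<forall>c<n. fact_perm t c = p c)
              \<and> tau_weight r s t {..<n} = (\<Prod>c<n. d c)} * r ^ (m1 + 1)"
proof -
  let ?T = "connected_shapes r s n m1 m2"
  have "conn_num2 r s n m1 m2 (monomial n p d) * r ^ n
      = (\<Sum>t\<in>?T. if (\<forall>c<n. fact_perm t c = p c) \<and> tau_weight r s t {..<n} = (\<Prod>c<n. d c)
                   then r ^ (m1 + 1) else 0)"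
    using card_relabelings_monomial[OF assms(1,2) _ assms(3,4)]
    by (simp add: conn_num2_eq_sum_relabelings[OF assms(1)] sum_distrib_right)
  then show ?thesis
    using finite_connected_shapes[OF assms(1)] by (simp add: sum.inter_filter[symmetric])
qed

section \<open>Shapes as shuffles\<close>

lemma filter_in_shuffles:
  assumes "\<forall>x\<in>set u. f x" "\<forall>x\<in>set v. \<not> f x" "t \<in> shuffles u v"
  shows "filter f t = u" "filter (\<lambda>x. \<not> f x) t = v"
proof -
  have "filter f t \<in> shuffles (filter f u) (filter f v)"
    using assms(3) filter_shuffles[of f u v] by blast
  then show "filter f t = u" using assms(1,2) by (simp add: filter_id_conv)
  have "filter (\<lambda>x. \<not> f x) t \<in> shuffles (filter (\<lambda>x. \<not> f x) u) (filter (\<lambda>x. \<not> f x) v)"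
    using assms(3) filter_shuffles[of "\<lambda>x. \<not> f x" u v] by blast
  then show "filter (\<lambda>x. \<not> f x) t = v" using assms(1,2) by (simp add: filter_id_conv)
qed

lemma mem_UN_shuffles_iff:
  assumes "\<forall>u\<in>P. \<forall>x\<in>set u. f x" "\<forall>v\<in>Q. \<forall>x\<in>set v. \<not> f x"
  shows "t \<in> (\<Union>(u, v)\<in>P \<times> Q. shuffles u v) \<longleftrightarrow> filter f t \<in> P \<and> filter (\<lambda>x. \<not> f x) t \<in> Q"
proof
  assume "t \<in> (\<Union>(u, v)\<in>P \<times> Q. shuffles u v)"
  then obtain u v where "u \<in> P" "v \<in> Q" "t \<in> shuffles u v" by blast
  with assms show "filter f t \<in> P \<and> filter (\<lambda>x. \<not> f x) t \<in> Q"
    using filter_in_shuffles[where u = u and v = v and f = f and t = t] by simp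
next
  assume "filter f t \<in> P \<and> filter (\<lambda>x. \<not> f x) t \<in> Q"
  then show "t \<in> (\<Union>(u, v)\<in>P \<times> Q. shuffles u v)"
    using partition_in_shuffles[of t f] by blast
qed

lemma card_UN_shuffles:
  assumes "finite P" "finite Q"
    and P: "\<forall>u\<in>P. length u = m1 \<and> (\<forall>x\<in>set u. f x)"
    and Q: "\<forall>v\<in>Q. length v = m2 \<and> (\<forall>x\<in>set v. \<not> f x)"
  shows "card (\<Union>(u, v)\<in>P \<times> Q. shuffles u v) = ((m1 + m2) choose m1) * card P * card Q"
proof -
  have "card (\<Union>(u, v)\<in>P \<times> Q. shuffles u v) = (\<Sum>i\<in>P \<times> Q. card ((\<lambda>(u, v). shuffles u v) i))"
  proof (rule card_UN_disjoint)
    show "\<forall>i\<in>P \<times> Q. \<forall>j\<in>P \<times> Q. i \<noteq> j \<longrightarrow> (\<lambda>(u, v). shuffles u v) i \<inter> (\<lambda>(u, v). shuffles u v) j = {}"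
    proof (intro ballI impI)
      fix i j assume ij: "i \<in> P \<times> Q" "j \<in> P \<times> Q" "i \<noteq> j"
      obtain u v u' v' where eq: "i = (u, v)" "j = (u', v')" by (cases i, cases j)
      have "t \<notin> shuffles u' v'" if "t \<in> shuffles u v" for t
        using that ij P Q filter_in_shuffles[where u = u and v = v and f = f and t = t]
          filter_in_shuffles[where u = u' and v = v' and f = f and t = t]
        unfolding eq by auto
      then show "(\<lambda>(u, v). shuffles u v) i \<inter> (\<lambda>(u, v). shuffles u v) j = {}"
        unfolding eq by auto
    qed
  qed (use assms in auto)
  also have "\<dots> = (\<Sum>i\<in>P \<times> Q. (m1 + m2) choose m1)"
  proof (rule sum.cong[OF refl], clarify)
    fix u v assume "u \<in> P" "v \<in> Q"
    then have "set u \<inter> set v = {}" using P Q by blast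
    with \<open>u \<in> P\<close> \<open>v \<in> Q\<close> show "card (shuffles u v) = (m1 + m2) choose m1"
      using P Q by (simp add: card_disjoint_shuffles)
  qed
  finally show ?thesis by (simp add: card_cartesian_product)
qed

definition sig_words :: "nat \<Rightarrow> nat \<Rightarrow> (nat \<Rightarrow> nat) \<Rightarrow> refl list set" where
  "sig_words n m p = {u. length u = m \<and> set u \<subseteq> sig_refls n \<and> connected_fact n u \<and> (\<forall>c<n. fact_perm u c = p c)}"

definition tau_words :: "nat \<Rightarrow> nat \<Rightarrow> nat \<Rightarrow> nat \<Rightarrow> complex \<Rightarrow> refl list set" where
  "tau_words r s n m z = {v. length v = m \<and> set v \<subseteq> tau_refls r s n \<and> tau_weight r s v {..<n} = z}"

lemma fact_perm_filter_Sig: "fact_perm (filter is_Sig t) = fact_perm t"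
proof (induction t)
  case (Cons x t)
  then show ?case by (cases x) auto
qed simp

lemma fact_edges_filter_Sig: "fact_edges (filter is_Sig t) = fact_edges t"
proof (induction t)
  case (Cons x t)
  then show ?case by (cases x) auto
qed simp

lemma tau_weight_filter_Tau: "tau_weight r s (filter (\<lambda>x. \<not> is_Sig x) t) C = tau_weight r s t C"
proof (induction t)
  case (Cons x t)
  then show ?case by (cases x) auto
qed simp

lemma shape_alphabet_split:
  "set t \<subseteq> sig_refls n \<union> tau_refls r s n
     \<longleftrightarrow> set (filter is_Sig t) \<subseteq> sig_refls n \<and> set (filter (\<lambda>x. \<not> is_Sig x) t) \<subseteq> tau_refls r s n"
  by (auto simp: sig_refls_def tau_refls_def)

lemma connected_shapes_eq_UN_shuffles:
  "{t \<in> connected_shapes r s n m1 m2. (\<forall>c<n. fact_perm t c = p c) \<and> tau_weight r s t {..<n} = z}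
     = (\<Union>(u, v)\<in>sig_words n m1 p \<times> tau_words r s n m2 z. shuffles u v)"
proof -
  have "\<forall>u\<in>sig_words n m1 p. \<forall>x\<in>set u. is_Sig x" "\<forall>v\<in>tau_words r s n m2 z. \<forall>x\<in>set v. \<not> is_Sig x"
    by (auto simp: sig_words_def tau_words_def sig_refls_def tau_refls_def)
  note split = mem_UN_shuffles_iff[OF this]
  show ?thesis
  proof (rule set_eqI)
    fix t
    show "t \<in> {t \<in> connected_shapes r s n m1 m2. (\<forall>c<n. fact_perm t c = p c) \<and> tau_weight r s t {..<n} = z}
        \<longleftrightarrow> t \<in> (\<Union>(u, v)\<in>sig_words n m1 p \<times> tau_words r s n m2 z. shuffles u v)"
      unfolding split unfolding connected_shapes_def sig_words_def tau_words_def connected_fact_def mem_Collect_eq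
        fact_perm_filter_Sig fact_edges_filter_Sig tau_weight_filter_Tau shape_alphabet_split
      by argo
  qed
qed

lemma card_sig_words:
  assumes "\<forall>a<n. p a < n"
  shows "card (sig_words n m p) = conn_num 1 1 n m (monomial n p (\<lambda>_. 1))"
proof -
  have "fact_prod 1 1 n u = monomial n p (\<lambda>_. 1) \<longleftrightarrow> (\<forall>c<n. fact_perm u c = p c)"
    if u: "set u \<subseteq> sig_refls n" for u
  proof -
    have u': "set u \<subseteq> Refl 1 1 n" using u by (simp only: Refl_1_1)
    have "fact_diag 1 1 u c = 1" for c
      using u by (induction u arbitrary: c) (auto simp: sig_refls_def)
    then show ?thesis
      using fact_prod_monomial[OF u'] monomial_eq_iff[of n "fact_perm u" p] fact_perm_less[OF u'] assms
      by auto
  qed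
  then show ?thesis
    unfolding conn_num_def factorizations_def sig_words_def Refl_1_1
    by (auto intro!: arg_cong[where f = card])
qed

section \<open>Counting words by their product\<close>

definition word_count :: "'a set \<Rightarrow> ('a \<Rightarrow> complex) \<Rightarrow> nat \<Rightarrow> complex \<Rightarrow> nat" where
  "word_count S g m z = card {zs. length zs = m \<and> set zs \<subseteq> S \<and> prod_list (map g zs) = z}"

lemma word_count_0: "word_count S g 0 z = (if z = 1 then 1 else 0)"
proof -
  have "{zs. length zs = 0 \<and> set zs \<subseteq> S \<and> prod_list (map g zs) = z} = (if z = 1 then {[]} else {})"
    by auto
  then show ?thesis by (simp add: word_count_def)
qed

lemma word_count_Suc:
  assumes "finite S" "\<forall>x\<in>S. g x \<noteq> 0"
  shows "word_count S g (Suc m) z = (\<Sum>x\<in>S. word_count S g m (z / g x))"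
proof -
  let ?W = "\<lambda>m z. {zs. length zs = m \<and> set zs \<subseteq> S \<and> prod_list (map g zs) = z}"
  have "?W (Suc m) z = (\<Union>x\<in>S. Cons x ` ?W m (z / g x))"
  proof (intro set_eqI iffI)
    fix zs assume "zs \<in> ?W (Suc m) z"
    then obtain x zs' where "zs = x # zs'" "x \<in> S" "zs' \<in> ?W m (prod_list (map g zs'))"
      by (cases zs) auto
    moreover from this \<open>zs \<in> ?W (Suc m) z\<close> have "prod_list (map g zs') = z / g x"
      using assms(2) by (auto simp: field_simps)
    ultimately show "zs \<in> (\<Union>x\<in>S. Cons x ` ?W m (z / g x))" by auto
  qed (use assms(2) in auto)
  moreover have "finite (?W m z')" for z'
    by (rule finite_subset[OF _ finite_lists_length_eq[OF assms(1), of m]]) auto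
  then have "card (\<Union>x\<in>S. Cons x ` ?W m (z / g x)) = (\<Sum>x\<in>S. card (Cons x ` ?W m (z / g x)))"
    using assms(1) by (intro card_UN_disjoint) auto
  ultimately show ?thesis
    by (simp add: word_count_def card_image)
qed

lemma word_count_uniform_fibres:
  assumes "finite S" "finite T" "f ` S \<subseteq> T" "\<And>y. y \<in> T \<Longrightarrow> card {x \<in> S. f x = y} = c"
    and "\<forall>y\<in>T. g y \<noteq> 0"
  shows "word_count S (g \<circ> f) m z = c ^ m * word_count T g m z"
proof (induction m arbitrary: z)
  case 0
  then show ?case by (simp add: word_count_0)
next
  case (Suc m)
  have nonzero: "\<forall>x\<in>S. (g \<circ> f) x \<noteq> 0" using assms(3,5) by auto
  have "word_count S (g \<circ> f) (Suc m) z = (\<Sum>x\<in>S. word_count S (g \<circ> f) m (z / (g \<circ> f) x))"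
    by (rule word_count_Suc[OF assms(1) nonzero])
  also have "\<dots> = (\<Sum>x\<in>S. c ^ m * word_count T g m (z / g (f x)))"
    unfolding Suc.IH by simp
  also have "\<dots> = (\<Sum>y\<in>T. \<Sum>x\<in>{x \<in> S. f x = y}. c ^ m * word_count T g m (z / g y))"
    by (rule sum.group[OF assms(1-3), symmetric, THEN trans]) (auto intro!: sum.cong)
  also have "\<dots> = c ^ Suc m * (\<Sum>y\<in>T. word_count T g m (z / g y))"
    by (simp add: assms(4) sum_distrib_left mult_ac)
  also have "\<dots> = c ^ Suc m * word_count T g (Suc m) z"
    by (simp add: word_count_Suc[OF assms(2,5)])
  finally show ?case .
qed

lemma cyc_num_word_count: "cyc_num q m z = word_count (mu q - {1}) id m z"
  by (simp add: cyc_num_def word_count_def)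

lemma mem_tau_refls: "x \<in> tau_refls r s n \<longleftrightarrow> (\<exists>i k. x = Tau i k \<and> i < n \<and> 0 < k \<and> k < r div s)"
  by (cases x) (auto simp: tau_refls_def Refl_def)

lemma tau_factor_Tau:
  "s dvd r \<Longrightarrow> 0 < r \<Longrightarrow> i < n \<Longrightarrow> tau_factor r s {..<n} (Tau i k) = zeta (r div s) ^ k"
  by (simp add: zeta_power_mult)

lemma tau_factor_image:
  assumes "0 < r" "s dvd r"
  shows "tau_factor r s {..<n} ` tau_refls r s n \<subseteq> mu (r div s) - {1}"
proof
  fix y assume "y \<in> tau_factor r s {..<n} ` tau_refls r s n"
  then obtain x where "x \<in> tau_refls r s n" "y = tau_factor r s {..<n} x" by blast
  then obtain i k where "y = tau_factor r s {..<n} (Tau i k)" "i < n" "0 < k" "k < r div s"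
    unfolding mem_tau_refls by blast
  then have "y \<in> (\<lambda>k. zeta (r div s) ^ k) ` ({..<r div s} - {0})"
    using tau_factor_Tau[OF assms(2,1)] by auto
  moreover have "0 < r div s" using assms by (auto elim: dvdE)
  ultimately show "y \<in> mu (r div s) - {1}"
    by (simp only: bij_betw_imp_surj_on[OF bij_betw_zeta_power_nontrivial])
qed

lemma card_tau_factor_fibre:
  assumes "0 < r" "s dvd r" "y \<in> mu (r div s) - {1}"
  shows "card {x \<in> tau_refls r s n. tau_factor r s {..<n} x = y} = n"
proof -
  let ?q = "r div s"
  have "0 < ?q" using assms(1,2) by (auto elim: dvdE)
  note bij = bij_betw_zeta_power_nontrivial[OF this]
  have "y \<in> (\<lambda>k. zeta ?q ^ k) ` ({..<?q} - {0})" using assms(3) by (simp only: bij_betw_imp_surj_on[OF bij])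
  then obtain k0 where k0: "k0 \<in> {..<?q} - {0}" "zeta ?q ^ k0 = y" by blast
  have unique: "k = k0" if "k \<in> {..<?q} - {0}" "zeta ?q ^ k = y" for k
    using inj_onD[OF bij_betw_imp_inj_on[OF bij]] k0 that by metis
  have "{x \<in> tau_refls r s n. tau_factor r s {..<n} x = y} = (\<lambda>i. Tau i k0) ` {..<n}"
  proof (intro set_eqI iffI)
    fix x assume "x \<in> {x \<in> tau_refls r s n. tau_factor r s {..<n} x = y}"
    then obtain i k where "x = Tau i k" "i < n" "0 < k" "k < ?q" "tau_factor r s {..<n} x = y"
      unfolding mem_Collect_eq mem_tau_refls by blast
    then show "x \<in> (\<lambda>i. Tau i k0) ` {..<n}" using unique[of k] tau_factor_Tau[OF assms(2,1)] by auto
  next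
    fix x assume "x \<in> (\<lambda>i. Tau i k0) ` {..<n}"
    then show "x \<in> {x \<in> tau_refls r s n. tau_factor r s {..<n} x = y}"
      using k0 tau_factor_Tau[OF assms(2,1)] by (auto simp: mem_tau_refls)
  qed
  then show ?thesis by (simp add: card_image inj_on_def)
qed

lemma card_tau_words:
  assumes "0 < r" "s dvd r"
  shows "card (tau_words r s n m z) = n ^ m * cyc_num (r div s) m z"
proof -
  have "0 < r div s" using assms by (auto elim: dvdE)
  then have "finite (mu (r div s) - {1})" "\<forall>y\<in>mu (r div s) - {1}. id y \<noteq> 0"
    using finite_mu[of "r div s"] root_unity_nonzero[of "r div s"] by (auto simp: mu_def)
  then have "word_count (tau_refls r s n) (id \<circ> tau_factor r s {..<n}) m z
      = n ^ m * word_count (mu (r div s) - {1}) id m z"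
    by (intro word_count_uniform_fibres tau_factor_image card_tau_factor_fibre assms)
      (simp_all add: tau_refls_def finite_Refl)
  then show ?thesis
    by (simp add: tau_words_def word_count_def tau_weight_def cyc_num_word_count)
qed

lemma sum_cyc_num:
  assumes "0 < q"
  shows "(\<Sum>y\<in>mu q. cyc_num q m y) = (q - 1) ^ m"
proof -
  let ?Z = "mu q - {1}"
  have Z: "finite ?Z" "card ?Z = q - 1"
    using finite_mu[OF assms] card_mu[OF assms] by (auto simp: mu_def)
  have prod_mu: "set zs \<subseteq> mu q \<Longrightarrow> prod_list zs \<in> mu q" for zs
    by (induction zs) (auto simp: mu_def power_mult_distrib)
  let ?W = "\<lambda>y. {zs. length zs = m \<and> set zs \<subseteq> ?Z \<and> prod_list zs = y}"
  have "{zs. set zs \<subseteq> ?Z \<and> length zs = m} = (\<Union>y\<in>mu q. ?W y)"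
    using prod_mu by auto
  moreover have "card (\<Union>y\<in>mu q. ?W y) = (\<Sum>y\<in>mu q. card (?W y))"
    using finite_mu[OF assms] finite_lists_length_eq[OF Z(1), of m]
    by (intro card_UN_disjoint) (auto intro: finite_subset[rotated])
  ultimately have "card {zs. set zs \<subseteq> ?Z \<and> length zs = m} = (\<Sum>y\<in>mu q. cyc_num q m y)"
    by (simp add: cyc_num_def)
  then show ?thesis using card_lists_length_eq[OF Z(1), of m] Z(2) by simp
qed

lemma cyc_num_Suc_add:
  assumes "0 < q" "z \<in> mu q"
  shows "cyc_num q (Suc m) z + cyc_num q m z = (q - 1) ^ m"
proof -
  let ?Z = "mu q - {1}"
  have nonzero: "y \<in> mu q \<Longrightarrow> y \<noteq> 0" for y using root_unity_nonzero[OF assms(1)] by (auto simp: mu_def)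
  have "cyc_num q (Suc m) z = (\<Sum>y\<in>?Z. cyc_num q m (z / y))"
    using word_count_Suc[of ?Z id m z] finite_mu[OF assms(1)] nonzero by (simp add: cyc_num_word_count)
  moreover have "(\<Sum>y\<in>mu q. cyc_num q m (z / y)) = cyc_num q m z + (\<Sum>y\<in>?Z. cyc_num q m (z / y))"
    using finite_mu[OF assms(1)] by (subst sum.remove[of _ 1]) (auto simp: mu_def)
  moreover have "bij_betw (\<lambda>y. z / y) (mu q) (mu q)"
    using assms(2) nonzero[OF assms(2)]
    by (intro bij_betw_byWitness[where f' = "\<lambda>y. z / y"]) (auto simp: mu_def power_divide)
  then have "(\<Sum>y\<in>mu q. cyc_num q m (z / y)) = (\<Sum>y\<in>mu q. cyc_num q m y)"
    by (rule sum.reindex_bij_betw)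
  ultimately show ?thesis using sum_cyc_num[OF assms(1), of m] by simp
qed

lemma cyc_num_closed_form:
  assumes "0 < q" "z \<in> mu q"
  shows "real (cyc_num q m z) = 1 / real q * ((real q - 1) ^ m - (-1) ^ m) + (if z = 1 then 1 else 0) * (-1) ^ m"
proof (induction m)
  case 0
  then show ?case by (simp add: cyc_num_word_count word_count_0)
next
  case (Suc m)
  have "real (cyc_num q (Suc m) z + cyc_num q m z) = real ((q - 1) ^ m)"
    using cyc_num_Suc_add[OF assms, of m] by (simp only:)
  then have "real (cyc_num q (Suc m) z) = (real q - 1) ^ m - real (cyc_num q m z)"
    using assms(1) by (simp add: of_nat_diff)
  also have "\<dots> = (real q - 1) ^ m - (1 / real q * ((real q - 1) ^ m - (-1) ^ m)
      + (if z = 1 then 1 else 0) * (-1) ^ m)"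
    by (simp only: Suc.IH)
  finally show ?case using assms(1) by (simp add: field_simps)
qed

lemma card_connected_shapes_perm_weight:
  assumes "0 < r" "s dvd r" "\<forall>a<n. p a < n"
  shows "card {t \<in> connected_shapes r s n m1 m2. (\<forall>c<n. fact_perm t c = p c) \<and> tau_weight r s t {..<n} = z}
    = ((m1 + m2) choose m1) * conn_num 1 1 n m1 (monomial n p (\<lambda>_. 1)) * (n ^ m2 * cyc_num (r div s) m2 z)"
proof -
  have "finite (sig_words n m1 p)"
    using finite_lists_length_eq[OF finite_Refl[of 1 1 n, unfolded Refl_1_1], of m1]
    by (rule finite_subset[rotated]) (auto simp: sig_words_def)
  moreover have "finite (tau_words r s n m2 z)"
    using finite_lists_length_eq[OF finite_Refl[of r s n], of m2]
    by (rule finite_subset[rotated]) (auto simp: tau_words_def tau_refls_def)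
  moreover have "\<forall>u\<in>sig_words n m1 p. length u = m1 \<and> (\<forall>x\<in>set u. is_Sig x)"
    "\<forall>v\<in>tau_words r s n m2 z. length v = m2 \<and> (\<forall>x\<in>set v. \<not> is_Sig x)"
    by (auto simp: sig_words_def tau_words_def sig_refls_def tau_refls_def)
  ultimately have "card (\<Union>(u, v)\<in>sig_words n m1 p \<times> tau_words r s n m2 z. shuffles u v)
      = ((m1 + m2) choose m1) * card (sig_words n m1 p) * card (tau_words r s n m2 z)"
    by (rule card_UN_shuffles)
  then show ?thesis
    by (simp add: connected_shapes_eq_UN_shuffles card_sig_words[OF assms(3)] card_tau_words[OF assms(1,2)])
qed

lemma conn_num2_times_power:
  assumes "0 < r" "0 < n" "s dvd r" "w \<in> Grp r s n"
  shows "conn_num2 r s n m1 m2 w * r ^ n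
    = ((m1 + m2) choose m1) * conn_num 1 1 n m1 (piS w) * (n ^ m2 * cyc_num (r div s) m2 (phi n w)) * r ^ (m1 + 1)"
proof -
  obtain p d where w: "w = monomial n p d" and p: "\<forall>a<n. p a < n" and d: "\<forall>a<n. d a \<noteq> 0 \<and> d a ^ r = 1"
    using Grp_monomialE[OF assms(4)] .
  then have "phi n w = (\<Prod>a<n. d a)" "piS w = monomial n p (\<lambda>_. 1)"
    by (simp_all add: phi_monomial piS_monomial)
  with w d show ?thesis
    using conn_num2_eq_card_shapes[OF assms(1,2) p] card_connected_shapes_perm_weight[OF assms(1,3) p] by simp
qed

lemma power_int_times_power:
  "(x :: 'a :: field) \<noteq> 0 \<Longrightarrow> x powi (int m - int n + 1) * x ^ n = x ^ (m + 1)"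
  by (simp add: power_int_add[symmetric] add.commute flip: power_int_of_nat)

theorem mainTheorem1:
  fixes r s n m1 m2 :: nat and w :: cmat
  assumes "0 < r" "0 < s" "0 < n" "s dvd r" "w \<in> Grp r s n"
  shows "real (conn_num2 r s n m1 m2 w)
           = (real r powi (int m1 - int n + 1) * real n ^ m2 * real ((m1 + m2) choose m1)
               * real (cyc_num (r div s) m2 (phi n w))) * real (conn_num 1 1 n m1 (piS w))
       \<and> real (cyc_num (r div s) m2 (phi n w))
           = 1 / real (r div s) * ((real (r div s) - 1) ^ m2 - (-1) ^ m2)
             + real (delta n w) * (-1) ^ m2"
proof
  have "real r \<noteq> 0" using assms(1) by simp
  have "real (conn_num2 r s n m1 m2 w) * real r ^ n
      = real ((m1 + m2) choose m1) * real (conn_num 1 1 n m1 (piS w))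
        * (real n ^ m2 * real (cyc_num (r div s) m2 (phi n w))) * (real r powi (int m1 - int n + 1) * real r ^ n)"
    unfolding power_int_times_power[OF \<open>real r \<noteq> 0\<close>]
    using conn_num2_times_power[OF assms(1,3-5), of m1 m2] by (metis of_nat_mult of_nat_power)
  then have "real (conn_num2 r s n m1 m2 w) * real r ^ n
      = (real r powi (int m1 - int n + 1) * real n ^ m2 * real ((m1 + m2) choose m1)
          * real (cyc_num (r div s) m2 (phi n w))) * real (conn_num 1 1 n m1 (piS w)) * real r ^ n"
    by (simp only: ac_simps)
  then show "real (conn_num2 r s n m1 m2 w)
      = (real r powi (int m1 - int n + 1) * real n ^ m2 * real ((m1 + m2) choose m1)
          * real (cyc_num (r div s) m2 (phi n w))) * real (conn_num 1 1 n m1 (piS w))"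
    using \<open>real r \<noteq> 0\<close> by simp
  have "0 < r div s" "phi n w \<in> mu (r div s)" using assms(1,4,5) by (auto simp: Grp_def elim: dvdE)
  then show "real (cyc_num (r div s) m2 (phi n w))
      = 1 / real (r div s) * ((real (r div s) - 1) ^ m2 - (-1) ^ m2) + real (delta n w) * (-1) ^ m2"
    using cyc_num_closed_form by (simp add: delta_def)
qed

end
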